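(* Let $n\geq 1$ and $s\geq 1$ be integers. Let $G$ be a connected graph on $n+s$ vertices and let $S\subseteq V(G)$ with $|S|=s$. Suppose that every non-terminal level with respect to $S$ contains at least $2$ vertices. Then \[ \sigma(S)\leq \begin{cases} \frac{1}{4}(n^2+2n), & \text{if } 2\mid n,\\[2pt] \frac{1}{4}(n^2+2n+1), & \text{if } 2\nmid n. \end{cases} \]
   Context: For a connected graph $G$ and $\emptyset\neq S\subseteq V(G)$, $d_G(S,u)=\min\{d_G(u,v): v\in S\}$, and the status of $S$ is $\sigma(S)=\sigma_G(S)=\sum_{u\in V(G)} d_G(S,u)$. For $i\geq 1$, the $i$-th level with respect to $S$ is the set of vertices $u$ with $d_G(S,u)=i$. The terminal level is the nonempty level with the largest index $i$; the non-terminal levels are all levels $1,\dots,r$ preceding the terminal level $r+1$ (all of which are nonempty by connectivity). *)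

theory Defs
  imports Complex_Main
begin

definition simple_graph :: "'a set \<Rightarrow> ('a \<Rightarrow> 'a \<Rightarrow> bool) \<Rightarrow> bool" where
  "simple_graph V E \<longleftrightarrow> finite V \<and> (\<forall>x y. E x y \<longrightarrow> x \<in> V \<and> y \<in> V)
     \<and> (\<forall>x y. E x y \<longrightarrow> E y x) \<and> (\<forall>x. \<not> E x x)"

inductive walk_len :: "('a \<Rightarrow> 'a \<Rightarrow> bool) \<Rightarrow> 'a \<Rightarrow> 'a \<Rightarrow> nat \<Rightarrow> bool" for E where
  nil: "walk_len E u u 0"
| cons: "E u v \<Longrightarrow> walk_len E v w k \<Longrightarrow> walk_len E u w (Suc k)"

definition connected_graph :: "'a set \<Rightarrow> ('a \<Rightarrow> 'a \<Rightarrow> bool) \<Rightarrow> bool" where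
  "connected_graph V E \<longleftrightarrow> simple_graph V E \<and> V \<noteq> {} \<and> (\<forall>u\<in>V. \<forall>v\<in>V. \<exists>k. walk_len E u v k)"

definition gdist :: "('a \<Rightarrow> 'a \<Rightarrow> bool) \<Rightarrow> 'a \<Rightarrow> 'a \<Rightarrow> nat" where
  "gdist E u v = (LEAST k. walk_len E u v k)"

definition setdist :: "('a \<Rightarrow> 'a \<Rightarrow> bool) \<Rightarrow> 'a set \<Rightarrow> 'a \<Rightarrow> nat" where
  "setdist E S u = Min ((\<lambda>v. gdist E u v) ` S)"

definition status :: "'a set \<Rightarrow> ('a \<Rightarrow> 'a \<Rightarrow> bool) \<Rightarrow> 'a set \<Rightarrow> nat" where
  "status V E S = (\<Sum>u\<in>V. setdist E S u)"

definition level :: "'a set \<Rightarrow> ('a \<Rightarrow> 'a \<Rightarrow> bool) \<Rightarrow> 'a set \<Rightarrow> nat \<Rightarrow> 'a set" where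
  "level V E S i = {u \<in> V. setdist E S u = i}"

definition terminal_index :: "'a set \<Rightarrow> ('a \<Rightarrow> 'a \<Rightarrow> bool) \<Rightarrow> 'a set \<Rightarrow> nat" where
  "terminal_index V E S = Max ((\<lambda>u. setdist E S u) ` V)"

end

theory Submission
  imports Defs
begin

text \<open>With \<open>t\<close> the terminal index, every vertex outside \<open>S\<close> has distance at most \<open>t\<close>
  from \<open>S\<close>, and each of the levels \<open>1, \<dots>, t - 1\<close> contains at least two vertices. Hence the total
  deficit \<open>\<Sum>\<^sub>u\<^sub>\<notin>\<^sub>S (t - d(S,u))\<close> is at least \<open>2 ((t - 1) + \<dots> + 1) = t (t - 1)\<close>, so
  \<open>\<sigma>(S) \<le> t n - t (t - 1) = t (n + 1 - t)\<close>, and a product of two naturals with sum \<open>n + 1\<close>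
  is at most \<open>\<lfloor>(n + 1)\<^sup>2 / 4\<rfloor>\<close>.\<close>

lemma double_sum_atLeastLessThan_diff: "2 * (\<Sum>i\<in>{1..<t}. t - i) = t * (t - 1 :: nat)"
proof -
  have "(\<Sum>i\<in>{1..<t}. t - i) = (\<Sum>i\<in>{1..<t}. i)"
    by (subst sum.atLeastLessThan_rev) (intro sum.cong, auto)
  also have "\<dots> = (\<Sum>i\<in>{Suc 0..t - 1}. i)"
    by (cases t) (simp_all add: atLeastLessThanSuc_atLeastAtMost)
  finally show ?thesis
    using double_gauss_sum_from_Suc_0[of "t - 1", where 'a = nat] by (cases t) simp_all
qed

lemma sum_add_level_deficit_le:
  fixes f :: "'a \<Rightarrow> nat"
  assumes "finite A" and bounded: "\<forall>u\<in>A. f u \<le> t"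
    and levels: "\<forall>i. 1 \<le> i \<and> i < t \<longrightarrow> k \<le> card {u\<in>A. f u = i}"
  shows "sum f A + k * (\<Sum>i\<in>{1..<t}. t - i) \<le> t * card A"
proof -
  define B where "B = {u\<in>A. 1 \<le> f u \<and> f u < t}"
  have "finite B" using \<open>finite A\<close> by (simp add: B_def)
  have "f ` B \<subseteq> {1..<t}" by (auto simp: B_def)
  have fibre: "{u\<in>B. f u = i} = {u\<in>A. f u = i}" if "i \<in> {1..<t}" for i
    using that by (auto simp: B_def)
  have "k * (\<Sum>i\<in>{1..<t}. t - i) \<le> (\<Sum>i\<in>{1..<t}. card {u\<in>A. f u = i} * (t - i))"
    unfolding sum_distrib_left using levels by (intro sum_mono) auto
  also have "\<dots> = (\<Sum>i\<in>{1..<t}. \<Sum>u\<in>{u\<in>B. f u = i}. t - f u)"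
    using fibre by (intro sum.cong) auto
  also have "\<dots> = (\<Sum>u\<in>B. t - f u)"
    using sum.group[OF \<open>finite B\<close> _ \<open>f ` B \<subseteq> {1..<t}\<close>, of "\<lambda>u. t - f u"] by simp
  also have "\<dots> \<le> (\<Sum>u\<in>A. t - f u)"
    using \<open>finite A\<close> by (intro sum_mono2) (auto simp: B_def)
  finally have deficit: "k * (\<Sum>i\<in>{1..<t}. t - i) \<le> (\<Sum>u\<in>A. t - f u)" .
  have "sum f A + (\<Sum>u\<in>A. t - f u) = t * card A"
    using bounded by (simp add: sum.distrib[symmetric])
  with deficit show ?thesis by linarith
qed

lemma four_mult_le_square_of_add:
  fixes a b :: nat
  shows "4 * (a * b) \<le> (a + b)\<^sup>2" and "odd (a + b) \<Longrightarrow> 4 * (a * b) + 1 \<le> (a + b)\<^sup>2"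
proof -
  have square: "int ((a + b)\<^sup>2) = int (4 * (a * b)) + (int a - int b)\<^sup>2"
    by (simp add: power2_eq_square algebra_simps)
  then show "4 * (a * b) \<le> (a + b)\<^sup>2" by (smt (verit) of_nat_le_iff zero_le_power2)
  assume "odd (a + b)"
  then have "int a - int b \<noteq> 0" by auto
  then have "0 < (int a - int b)\<^sup>2" by simp
  with square show "4 * (a * b) + 1 \<le> (a + b)\<^sup>2" by linarith
qed

lemma quarter_square_bound:
  fixes m t n :: nat
  assumes "m + t * (t - 1) \<le> t * n"
  shows "real m \<le>
           (if even n then (real n ^ 2 + 2 * real n) / 4 else (real n ^ 2 + 2 * real n + 1) / 4)"
proof -
  have "t * (t - 1) \<le> t * n"
    using assms by linarith
  then have "t \<le> n + 1"
    by auto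
  then have "m \<le> t * (n + 1 - t)"
    using assms by (simp add: diff_mult_distrib2 algebra_simps)
  moreover have "t + (n + 1 - t) = n + 1"
    using \<open>t \<le> n + 1\<close> by simp
  ultimately have "4 * m \<le> (n + 1)\<^sup>2" and "even n \<Longrightarrow> 4 * m + 1 \<le> (n + 1)\<^sup>2"
    using four_mult_le_square_of_add[of t "n + 1 - t"] by auto
  then have "4 * m \<le> n\<^sup>2 + 2 * n + (if even n then 0 else 1)"
    by (auto simp: power2_eq_square)
  then have "real (4 * m) \<le> real (n\<^sup>2 + 2 * n + (if even n then 0 else 1))"
    by (rule of_nat_mono)
  then show ?thesis
    by (cases "even n") simp_all
qed

lemma setdist_eq_0:
  assumes "finite S" and "u \<in> S"
  shows "setdist E S u = 0"
proof -
  have "gdist E u u = 0"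
    unfolding gdist_def by (simp add: walk_len.nil)
  moreover have "setdist E S u \<le> gdist E u u"
    unfolding setdist_def using assms by (intro Min_le) auto
  ultimately show ?thesis by simp
qed

lemma setdist_le_terminal_index:
  assumes "finite V" and "u \<in> V"
  shows "setdist E S u \<le> terminal_index V E S"
  unfolding terminal_index_def using assms by (intro Max_ge) auto

lemma status_eq_sum_outside:
  assumes "finite V" and "S \<subseteq> V"
  shows "status V E S = (\<Sum>u\<in>V - S. setdist E S u)"
proof -
  have "finite S" using assms finite_subset by blast
  then have "(\<Sum>u\<in>S. setdist E S u) = 0" by (simp add: setdist_eq_0)
  then show ?thesis
    unfolding status_def using assms by (simp add: sum.subset_diff[of S V])
qed

lemma level_eq_outside:
  assumes "finite S" and "1 \<le> i"
  shows "level V E S i = {u\<in>V - S. setdist E S u = i}"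
  using assms setdist_eq_0[of S _ E] by (auto simp: level_def)

theorem lemma6:
  fixes V :: "'a set" and E :: "'a \<Rightarrow> 'a \<Rightarrow> bool" and S :: "'a set" and n s :: nat
  assumes "n \<ge> 1" and "s \<ge> 1"
    and "connected_graph V E" and "card V = n + s"
    and "S \<subseteq> V" and "card S = s"
    and "\<forall>i. 1 \<le> i \<and> i < terminal_index V E S \<longrightarrow> card (level V E S i) \<ge> 2"
  shows "real (status V E S) \<le>
           (if even n then (real n ^ 2 + 2 * real n) / 4 else (real n ^ 2 + 2 * real n + 1) / 4)"
proof -
  define t where "t = terminal_index V E S"
  have "finite V"
    using \<open>connected_graph V E\<close> by (simp add: connected_graph_def simple_graph_def)
  moreover have "finite S"
    using \<open>finite V\<close> \<open>S \<subseteq> V\<close> finite_subset by blast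
  ultimately have "card (V - S) = n"
    using assms(4-6) by (simp add: card_Diff_subset)
  have "\<forall>i. 1 \<le> i \<and> i < t \<longrightarrow> 2 \<le> card {u\<in>V - S. setdist E S u = i}"
    using assms(7) \<open>finite S\<close> by (simp add: t_def level_eq_outside)
  then have "(\<Sum>u\<in>V - S. setdist E S u) + 2 * (\<Sum>i\<in>{1..<t}. t - i) \<le> t * card (V - S)"
    using \<open>finite V\<close> by (intro sum_add_level_deficit_le) (auto simp: t_def setdist_le_terminal_index)
  then have "status V E S + t * (t - 1) \<le> t * n"
    unfolding status_eq_sum_outside[OF \<open>finite V\<close> \<open>S \<subseteq> V\<close>]
      double_sum_atLeastLessThan_diff \<open>card (V - S) = n\<close> .
  then show ?thesis by (rule quarter_square_bound)
qed

end
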